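(* Let $B\subset GL_n(\mathbb{C})$ be the group of invertible upper triangular matrices acting on $\mathfrak{b}^*=\mathfrak{gl}_n/\mathfrak{n}^+$ by conjugation, $b\cdot s=bsb^{-1}$. Then $\mathbb{C}[\mathfrak{b}^*]^B=\mathbb{C}[\operatorname{tr}(s)]$.
   Context: $\mathfrak{n}^+$ denotes the strictly upper triangular $n\times n$ matrices; $\mathfrak{b}^*$ is identified with $\mathfrak{gl}_n/\mathfrak{n}^+$ (equivalently with lower triangular matrices), and conjugation by $B$ preserves $\mathfrak{n}^+$ so descends to the quotient. The trace is well defined on $\mathfrak{gl}_n/\mathfrak{n}^+$. *)

theory Defs
  imports "HOL-Analysis.Analysis" "HOL-Computational_Algebra.Polynomial"
begin

inductive poly_fun :: "(complex^'n^'n \<Rightarrow> complex) \<Rightarrow> bool" where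
  pf_const: "poly_fun (\<lambda>s. c)"
| pf_coord: "poly_fun (\<lambda>s. s $ i $ j)"
| pf_add: "poly_fun f \<Longrightarrow> poly_fun g \<Longrightarrow> poly_fun (\<lambda>s. f s + g s)"
| pf_mult: "poly_fun f \<Longrightarrow> poly_fun g \<Longrightarrow> poly_fun (\<lambda>s. f s * g s)"

definition strictly_upper :: "complex^('n::{finite,linorder})^('n::{finite,linorder}) \<Rightarrow> bool" where
  "strictly_upper N \<longleftrightarrow> (\<forall>i j. j \<le> i \<longrightarrow> N $ i $ j = 0)"

definition upper_tri :: "complex^('n::{finite,linorder})^('n::{finite,linorder}) \<Rightarrow> bool" where
  "upper_tri b \<longleftrightarrow> (\<forall>i j. j < i \<longrightarrow> b $ i $ j = 0)"

definition borel :: "(complex^('n::{finite,linorder})^('n::{finite,linorder})) set" where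
  "borel = {b. upper_tri b \<and> invertible b}"

text \<open>C[b^*] with b^* = gl_n / n^+: polynomial functions on gl_n constant on
  cosets of n^+, i.e. functions on the quotient.\<close>
definition coord_ring_bstar :: "(complex^('n::{finite,linorder})^('n::{finite,linorder}) \<Rightarrow> complex) set" where
  "coord_ring_bstar = {f. poly_fun f \<and> (\<forall>s N. strictly_upper N \<longrightarrow> f (s + N) = f s)}"

definition B_invariants :: "(complex^('n::{finite,linorder})^('n::{finite,linorder}) \<Rightarrow> complex) set" where
  "B_invariants = {f \<in> coord_ring_bstar.
      \<forall>b \<in> borel. \<forall>s. f (b ** s ** matrix_inv b) = f s}"

end

theory Submission
  imports Defs
begin

text \<open>An invariant f first forgets the strictly upper part of s. Conjugating the remaining
  lower triangular matrix by the diagonal matrix with entries t^0, t^1, ..., t^(n-1) scales the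
  entry (i,j) by t^(i-j); the value of f is then a polynomial in t that is constant for t \<noteq> 0,
  hence equal to its value at t = 0, where only the diagonal of s survives. Conjugating a diagonal
  matrix plus one subdiagonal unit entry by a transvection shifts any amount between two diagonal
  entries, so f only sees the sum of the diagonal, i.e. the trace.\<close>

definition diag_mat :: "('n::finite \<Rightarrow> 'a::semiring_1) \<Rightarrow> 'a^'n^'n" where
  "diag_mat d = (\<chi> k l. if k = l then d k else 0)"

definition transvection :: "'n::finite \<Rightarrow> 'n \<Rightarrow> 'a::semiring_1 \<Rightarrow> 'a^'n^'n" where
  "transvection i j x = (\<chi> k l. if k = l then 1 else if k = i \<and> l = j then x else 0)"

definition index_rank :: "'n::{finite,linorder} \<Rightarrow> nat" where
  "index_rank i = card {m. m < i}"

lemma index_rank_less: "j < i \<Longrightarrow> index_rank j < index_rank i"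
  unfolding index_rank_def by (rule psubset_card_mono) auto

lemma index_rank_le: "j \<le> i \<Longrightarrow> index_rank j \<le> index_rank i"
  by (metis index_rank_less order.order_iff_strict less_imp_le_nat)

lemma matrix_inv_unique:
  fixes A :: "'a::semiring_1^'n^'m" and B :: "'a^'m^'n"
  assumes "A ** B = mat 1" "B ** A = mat 1"
  shows "matrix_inv A = B"
proof -
  let ?C = "matrix_inv A"
  have "A ** ?C = mat 1 \<and> ?C ** A = mat 1"
    unfolding matrix_inv_def by (rule someI[of _ B]) (use assms in auto)
  then have "?C = ?C ** (A ** B)" "?C ** A = mat 1" by (simp_all add: assms matrix_mul_rid)
  then show ?thesis by (metis matrix_mul_assoc matrix_mul_lid)
qed

lemma diag_mat_mult_left: "(diag_mat d ** A) $ k $ l = d k * A $ k $ l"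
proof -
  have "(diag_mat d ** A) $ k $ l = (\<Sum>m\<in>UNIV. if m = k then d k * A $ k $ l else 0)"
    unfolding matrix_matrix_mult_def diag_mat_def vec_lambda_beta by (rule sum.cong) auto
  then show ?thesis by simp
qed

lemma diag_mat_mult_right: "(A ** diag_mat d) $ k $ l = A $ k $ l * d l"
proof -
  have "(A ** diag_mat d) $ k $ l = (\<Sum>m\<in>UNIV. if m = l then A $ k $ l * d l else 0)"
    unfolding matrix_matrix_mult_def diag_mat_def vec_lambda_beta by (rule sum.cong) auto
  then show ?thesis by simp
qed

lemma transvection_mult_left:
  assumes "i \<noteq> j"
  shows "(transvection i j x ** A) $ k $ l = A $ k $ l + (if k = i then x * A $ j $ l else 0)"
proof -
  have "(transvection i j x ** A) $ k $ l
      = (\<Sum>m\<in>UNIV. (if m = k then A $ k $ l else 0) + (if m = j \<and> k = i then x * A $ j $ l else 0))"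
    unfolding matrix_matrix_mult_def transvection_def vec_lambda_beta
    using assms by (intro sum.cong) auto
  then show ?thesis by (simp add: sum.distrib)
qed

lemma transvection_mult_right:
  assumes "i \<noteq> j"
  shows "(A ** transvection i j x) $ k $ l = A $ k $ l + (if l = j then A $ k $ i * x else 0)"
proof -
  have "(A ** transvection i j x) $ k $ l
      = (\<Sum>m\<in>UNIV. (if m = l then A $ k $ l else 0) + (if m = i \<and> l = j then A $ k $ i * x else 0))"
    unfolding matrix_matrix_mult_def transvection_def vec_lambda_beta
    using assms by (intro sum.cong) auto
  then show ?thesis by (simp add: sum.distrib)
qed

lemma transvection_inverse:
  fixes x :: "'a::ring_1"
  assumes "i \<noteq> j"
  shows "transvection i j x ** transvection i j (- x) = mat 1"
    and "transvection i j (- x) ** transvection i j x = mat 1"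
  using assms by (simp_all add: vec_eq_iff transvection_mult_left)
    (auto simp: transvection_def mat_def)

lemma diag_mat_inverse:
  fixes d :: "'n::finite \<Rightarrow> 'a::field"
  assumes "\<And>k. d k \<noteq> 0"
  shows "diag_mat d ** diag_mat (\<lambda>k. inverse (d k)) = mat 1"
    and "diag_mat (\<lambda>k. inverse (d k)) ** diag_mat d = mat 1"
  using assms by (simp_all add: vec_eq_iff diag_mat_mult_left) (simp_all add: diag_mat_def mat_def)

lemma trace_conjugate:
  fixes b c s :: "'a::comm_semiring_1^'n^'n"
  assumes "c ** b = mat 1"
  shows "trace (b ** s ** c) = trace s"
  using assms trace_mul_sym[of "b ** s" c] by (simp add: matrix_mul_assoc matrix_mul_lid)

lemma trace_add_strictly_upper: "strictly_upper N \<Longrightarrow> trace (s + N) = trace s"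
  by (simp add: trace_add trace_def strictly_upper_def)

lemma poly_fun_sum:
  "finite A \<Longrightarrow> (\<And>i. i \<in> A \<Longrightarrow> poly_fun (g i)) \<Longrightarrow> poly_fun (\<lambda>s. \<Sum>i\<in>A. g i s)"
proof (induction A rule: finite_induct)
  case empty
  then show ?case using pf_const[of 0] by simp
next
  case (insert x F)
  then have "poly_fun (\<lambda>s. g x s + (\<Sum>i\<in>F. g i s))" by (intro pf_add) auto
  then show ?case using insert by simp
qed

lemma poly_fun_poly_trace: "poly_fun (\<lambda>s :: complex^'n^'n. poly p (trace s))"
proof (induction p)
  case 0
  then show ?case using pf_const[of 0] by simp
next
  case (pCons a p)
  have "poly_fun (trace :: complex^'n^'n \<Rightarrow> complex)"
    unfolding trace_def by (rule poly_fun_sum) (auto intro: pf_coord)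
  then have "poly_fun (\<lambda>s :: complex^'n^'n. a + trace s * poly p (trace s))"
    by (rule pf_add[OF pf_const pf_mult[OF _ pCons.IH]])
  then show ?case by simp
qed

lemma poly_fun_along_polynomial_curve:
  assumes "poly_fun f" and "\<And>i j. \<exists>q. \<forall>t. M t $ i $ j = poly q t"
  shows "\<exists>p. \<forall>t. f (M t) = poly p t"
  using assms(1)
proof (induction rule: poly_fun.induct)
  case (pf_const c)
  show ?case by (rule exI[of _ "[:c:]"]) simp
next
  case (pf_coord i j)
  show ?case by (rule assms(2))
next
  case (pf_add f g)
  then obtain p q where "\<forall>t. f (M t) = poly p t" "\<forall>t. g (M t) = poly q t" by blast
  then show ?case by (intro exI[of _ "p + q"]) simp
next
  case (pf_mult f g)
  then obtain p q where "\<forall>t. f (M t) = poly p t" "\<forall>t. g (M t) = poly q t" by blast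
  then show ?case by (intro exI[of _ "p * q"]) simp
qed

lemma poly_eq_const_off_zero:
  fixes p :: "'a::{idom,ring_char_0} poly"
  assumes "\<And>t. t \<noteq> 0 \<Longrightarrow> poly p t = c"
  shows "poly p 0 = c"
proof (rule ccontr)
  assume ne: "poly p 0 \<noteq> c"
  then have "p - [:c:] \<noteq> 0" by auto
  then have "finite {t. poly (p - [:c:]) t = 0}" by (rule poly_roots_finite)
  moreover have "UNIV - {0} \<subseteq> {t. poly (p - [:c:]) t = 0}" using assms by auto
  ultimately have "finite (UNIV - {0::'a})" by (rule rev_finite_subset)
  then show False by (simp add: infinite_UNIV_char_0)
qed

context
  fixes f :: "complex^('n::{finite,linorder})^('n::{finite,linorder}) \<Rightarrow> complex"
  assumes f_inv: "f \<in> B_invariants"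
begin

lemma B_invariant_poly_fun: "poly_fun f"
  using f_inv by (simp add: B_invariants_def coord_ring_bstar_def)

lemma B_invariant_add_strictly_upper: "strictly_upper N \<Longrightarrow> f (s + N) = f s"
  using f_inv by (simp add: B_invariants_def coord_ring_bstar_def)

lemma B_invariant_conjugate:
  assumes "upper_tri b" "b ** c = mat 1" "c ** b = mat 1"
  shows "f (b ** s ** c) = f s"
proof -
  have "b \<in> borel" using assms by (auto simp: borel_def invertible_def)
  with f_inv have "f (b ** s ** matrix_inv b) = f s" by (simp add: B_invariants_def)
  then show ?thesis using assms matrix_inv_unique by metis
qed

lemma B_invariant_lower_part: "f (\<chi> i j. if i < j then 0 else s $ i $ j) = f s"
proof -
  have "strictly_upper (\<chi> i j. if i < j then - s $ i $ j else 0)"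
    by (auto simp: strictly_upper_def)
  moreover have "(\<chi> i j. if i < j then 0 else s $ i $ j)
      = s + (\<chi> i j. if i < j then - s $ i $ j else 0)"
    by (simp add: vec_eq_iff)
  ultimately show ?thesis by (simp add: B_invariant_add_strictly_upper)
qed

lemma B_invariant_scale_lower:
  assumes "t \<noteq> 0"
  shows "f (\<chi> i j. if j \<le> i then s $ i $ j * t ^ (index_rank i - index_rank j) else 0) = f s"
proof -
  let ?L = "\<chi> i j. if i < j then 0 else s $ i $ j"
  let ?d = "\<lambda>i. t ^ index_rank i"
  have conj: "diag_mat ?d ** ?L ** diag_mat (\<lambda>k. inverse (?d k))
      = (\<chi> i j. if j \<le> i then s $ i $ j * t ^ (index_rank i - index_rank j) else 0)"
  proof -
    have "t ^ index_rank i * s $ i $ j * inverse (t ^ index_rank j)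
        = s $ i $ j * t ^ (index_rank i - index_rank j)" if "j \<le> i" for i j :: 'n
    proof -
      have "index_rank j \<le> index_rank i"
        using that by (rule index_rank_le)
      then have "t ^ index_rank i = t ^ index_rank j * t ^ (index_rank i - index_rank j)"
        by (simp flip: power_add)
      then show ?thesis using assms by (simp add: field_simps)
    qed
    then show ?thesis by (auto simp: vec_eq_iff diag_mat_mult_left diag_mat_mult_right)
  qed
  have "upper_tri (diag_mat ?d)" by (auto simp: upper_tri_def diag_mat_def)
  then have "f (diag_mat ?d ** ?L ** diag_mat (\<lambda>k. inverse (?d k))) = f ?L"
    using assms by (intro B_invariant_conjugate diag_mat_inverse) auto
  then show ?thesis by (simp only: conj B_invariant_lower_part)
qed

lemma B_invariant_diag: "f s = f (diag_mat (\<lambda>k. s $ k $ k))"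
proof -
  define M where
    "M t = (\<chi> i j. if j \<le> i then s $ i $ j * t ^ (index_rank i - index_rank j) else 0)" for t
  have "\<exists>p. \<forall>t. f (M t) = poly p t"
  proof (rule poly_fun_along_polynomial_curve[OF B_invariant_poly_fun])
    fix i j
    show "\<exists>q. \<forall>t. M t $ i $ j = poly q t"
      by (rule exI[of _ "if j \<le> i then monom (s $ i $ j) (index_rank i - index_rank j) else 0"])
        (simp add: M_def poly_monom)
  qed
  then obtain p where p: "\<And>t. f (M t) = poly p t" by blast
  have "poly p 0 = f s"
  proof (rule poly_eq_const_off_zero)
    fix t :: complex
    assume "t \<noteq> 0"
    then have "f (M t) = f s" unfolding M_def by (rule B_invariant_scale_lower)
    then show "poly p t = f s" using p by simp
  qed
  moreover have "M 0 = diag_mat (\<lambda>k. s $ k $ k)"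
    by (auto simp: vec_eq_iff M_def diag_mat_def)
      (metis index_rank_less order.not_eq_order_implies_strict)
  ultimately show ?thesis using p by metis
qed

lemma B_invariant_diag_shift_forward:
  assumes "i < j"
  shows "f (diag_mat a) = f (diag_mat (a(i := a i + x, j := a j - x)))"
proof -
  define S :: "complex^('n::{finite,linorder})^('n::{finite,linorder})"
    where "S = (\<chi> k l. if k = l then a k else if k = j \<and> l = i then 1 else 0)"
  let ?T = "transvection i j x ** S ** transvection i j (- x)"
  have ij: "i \<noteq> j" using assms by simp
  have "upper_tri (transvection i j x)"
    using assms by (auto simp: upper_tri_def transvection_def)
  then have "f ?T = f S"
    using ij by (intro B_invariant_conjugate transvection_inverse)
  moreover have "(\<lambda>k. S $ k $ k) = a" by (simp add: S_def)
  moreover have "(\<lambda>k. ?T $ k $ k) = a(i := a i + x, j := a j - x)"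
    using ij by (auto simp: fun_eq_iff transvection_mult_left transvection_mult_right S_def)
  ultimately show ?thesis by (metis B_invariant_diag)
qed

lemma B_invariant_diag_shift:
  assumes "i \<noteq> j"
  shows "f (diag_mat a) = f (diag_mat (a(i := a i + x, j := a j - x)))"
proof (cases "i < j")
  case True
  then show ?thesis by (rule B_invariant_diag_shift_forward)
next
  case False
  then have "j < i" using assms by simp
  then have "f (diag_mat a) = f (diag_mat (a(j := a j + - x, i := a i - - x)))"
    by (rule B_invariant_diag_shift_forward)
  also have "a(j := a j + - x, i := a i - - x) = a(i := a i + x, j := a j - x)"
    using assms by (auto simp: fun_eq_iff)
  finally show ?thesis .
qed

lemma B_invariant_diag_gather:
  assumes "finite S" "i \<notin> S"
  shows "f (diag_mat a)
    = f (diag_mat (\<lambda>k. if k \<in> S then 0 else if k = i then a i + sum a S else a k))"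
  using assms
proof (induction S rule: finite_induct)
  case empty
  have "(\<lambda>k. if k \<in> {} then 0 else if k = i then a i + sum a {} else a k) = a" by auto
  then show ?case by simp
next
  case (insert k S)
  let ?b = "\<lambda>l. if l \<in> S then 0 else if l = i then a i + sum a S else a l"
  have "i \<noteq> k" using insert.prems by auto
  have "f (diag_mat a) = f (diag_mat ?b)" using insert by simp
  also have "\<dots> = f (diag_mat (?b(i := ?b i + a k, k := ?b k - a k)))"
    using \<open>i \<noteq> k\<close> by (rule B_invariant_diag_shift)
  also have "?b(i := ?b i + a k, k := ?b k - a k)
      = (\<lambda>l. if l \<in> insert k S then 0 else if l = i then a i + sum a (insert k S) else a l)"
    using insert \<open>i \<noteq> k\<close> by (auto simp: fun_eq_iff)
  finally show ?case .
qed

lemma B_invariant_diag_trace: "f s = f (diag_mat ((\<lambda>_. 0)(i := trace s)))"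
proof -
  let ?a = "\<lambda>k. s $ k $ k"
  have "f s = f (diag_mat ?a)" by (rule B_invariant_diag)
  also have "\<dots> = f (diag_mat
      (\<lambda>k. if k \<in> UNIV - {i} then 0 else if k = i then ?a i + sum ?a (UNIV - {i}) else ?a k))"
    by (rule B_invariant_diag_gather) auto
  also have "(\<lambda>k. if k \<in> UNIV - {i} then 0 else if k = i then ?a i + sum ?a (UNIV - {i}) else ?a k)
      = (\<lambda>_. 0)(i := trace s)"
    by (auto simp: fun_eq_iff trace_def sum.remove[of UNIV i])
  finally show ?thesis .
qed

lemma B_invariant_eq_poly_trace:
  obtains p where "f = (\<lambda>s. poly p (trace s))"
proof -
  fix i :: 'n
  have "\<exists>p. \<forall>t. f (diag_mat ((\<lambda>_. 0)(i := t))) = poly p t"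
  proof (rule poly_fun_along_polynomial_curve[OF B_invariant_poly_fun])
    fix k l :: 'n
    show "\<exists>q. \<forall>t. diag_mat ((\<lambda>_. 0)(i := t)) $ k $ l = poly q t"
      by (rule exI[of _ "if k = l \<and> k = i then [:0, 1:] else 0"]) (auto simp: diag_mat_def)
  qed
  then obtain p where "\<And>t. f (diag_mat ((\<lambda>_. 0)(i := t))) = poly p t" by blast
  then have "f = (\<lambda>s. poly p (trace s))" by (metis B_invariant_diag_trace)
  then show thesis by (rule that)
qed

end

lemma poly_trace_B_invariant:
  "(\<lambda>s. poly p (trace s)) \<in> (B_invariants :: (complex^('n::{finite,linorder})^('n::{finite,linorder}) \<Rightarrow> complex) set)"
proof -
  have "trace (b ** s ** matrix_inv b) = trace s" if "b \<in> borel"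
    for b s :: "complex^('n::{finite,linorder})^('n::{finite,linorder})"
  proof (rule trace_conjugate)
    show "matrix_inv b ** b = mat 1"
      using that unfolding borel_def invertible_def matrix_inv_def by (auto intro: someI2_ex)
  qed
  then show ?thesis
    by (simp add: B_invariants_def coord_ring_bstar_def poly_fun_poly_trace trace_add_strictly_upper)
qed

theorem mainTheorem7:
  shows "(B_invariants :: (complex^('n::{finite,linorder})^('n::{finite,linorder}) \<Rightarrow> complex) set)
           = {(\<lambda>s. poly p (trace s)) | p :: complex poly. True}"
  using B_invariant_eq_poly_trace poly_trace_B_invariant by blast

end
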